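(* Let $k',d',n'$ be positive integers with $k'<d'<n'/2$. For each positive integer $m$ set $k=k'm$, $d=d'm$, $n=n'm$, let $f_m=\mathrm{Sym}_{d,n}(x_1,\ldots,x_n)=\sum_{I\in\{0,1\}^n,\,|I|=d}x^I$, let $M_m$ be the matrix with rows indexed by $I\in\{0,1\}^n$ with $|I|=k$, columns indexed by $J\in\{0,1\}^n$ with $|J|=d-k$, and entries $1$ if $I,J$ have disjoint supports and $0$ otherwise, and let $B_m=M_m^TM_m$. Let $u_m=\dim\partial^{=k} f_m$ and $v_m=\mathrm{Tr}(B_m)^2/\mathrm{Tr}(B_m^2)$. Then $v_m/u_m\to 0$ as $m\to\infty$.
   Context: $x^I$ for $I\in\{0,1\}^n$ denotes the multilinear monomial $x_1^{I_1}\cdots x_n^{I_n}$, and $|I|=\sum_i I_i$. $\partial^{=k} f$ denotes the real linear span of all partial derivatives of $f$ of total order $k$. *)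

theory Defs
  imports "HOL-Analysis.Analysis" "HOL-Library.Poly_Mapping"
begin

text \<open>Real multivariate polynomials in variables x_0, x_1, ... :
  coefficient maps from exponent vectors (finitely supported nat-to-nat maps) to real.\<close>
type_synonym rpoly = "(nat \<Rightarrow>\<^sub>0 nat) \<Rightarrow>\<^sub>0 real"

definition pscale :: "real \<Rightarrow> rpoly \<Rightarrow> rpoly" where
  "pscale c p = Poly_Mapping.map (\<lambda>x. c * x) p"

definition pdim_span :: "rpoly set \<Rightarrow> nat" where
  "pdim_span S = vector_space.dim pscale (module.span pscale S)"

definition pderiv_var :: "nat \<Rightarrow> rpoly \<Rightarrow> rpoly" where
  "pderiv_var i p = Abs_poly_mapping
     (\<lambda>a. of_nat (Poly_Mapping.lookup a i + 1) * Poly_Mapping.lookup p (a + Poly_Mapping.single i (1::nat)))"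

definition mono_set :: "nat set \<Rightarrow> rpoly" where
  "mono_set I = Poly_Mapping.single (\<Sum>i\<in>I. Poly_Mapping.single i 1) 1"

definition Sym :: "nat \<Rightarrow> nat \<Rightarrow> rpoly" where
  "Sym d n = (\<Sum>I\<in>{I. I \<subseteq> {..<n} \<and> card I = d}. mono_set I)"

definition dim_partials :: "nat \<Rightarrow> nat \<Rightarrow> rpoly \<Rightarrow> nat" where
  "dim_partials n k f =
     pdim_span {foldr pderiv_var is f | is. length is = k \<and> set is \<subseteq> {..<n}}"

definition Mdisj :: "nat set \<Rightarrow> nat set \<Rightarrow> real" where
  "Mdisj I J = (if I \<inter> J = {} then 1 else 0)"

definition subsets_of_size :: "nat \<Rightarrow> nat \<Rightarrow> nat set set" where
  "subsets_of_size n s = {I. I \<subseteq> {..<n} \<and> card I = s}"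

definition Bmat :: "nat \<Rightarrow> nat \<Rightarrow> nat \<Rightarrow> nat set \<Rightarrow> nat set \<Rightarrow> real" where
  "Bmat n k d J J' = (\<Sum>I\<in>subsets_of_size n k. Mdisj I J * Mdisj I J')"

definition trB :: "nat \<Rightarrow> nat \<Rightarrow> nat \<Rightarrow> real" where
  "trB n k d = (\<Sum>J\<in>subsets_of_size n (d - k). Bmat n k d J J)"

definition trB2 :: "nat \<Rightarrow> nat \<Rightarrow> nat \<Rightarrow> real" where
  "trB2 n k d = (\<Sum>J\<in>subsets_of_size n (d - k). \<Sum>J'\<in>subsets_of_size n (d - k).
                    Bmat n k d J J' * Bmat n k d J' J)"

end

theory Submission
  imports Defs
begin

text \<open>Write \<open>a = d - k\<close>, \<open>p = min k a\<close> and \<open>q = d - p\<close>. For a \<open>k\<close>-set \<open>S\<close> the derivative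
  \<open>\<partial>\<^sub>S Sym\<^sub>d\<^sub>,\<^sub>n\<close> is the elementary symmetric polynomial of degree \<open>a\<close> in the variables outside \<open>S\<close>,
  so the coefficient matrix of these derivatives on the monomials \<open>x\<^sup>J\<close>, \<open>|J| = a\<close>, is the
  disjointness matrix \<open>M\<close>. Grouping sets by the size of their intersection with a fixed set turns
  the relevant linear systems into triangular ones with binomial entries, so for \<open>k \<le> a\<close> the
  derivatives are independent and for \<open>a \<le> k\<close> they span every \<open>x\<^sup>J\<close>: in both cases
  \<open>u \<ge> C(n, p)\<close>. On the other side \<open>Tr B = C(n, p) C(n - p, q)\<close>, while \<open>Tr B\<^sup>2\<close>, the squared
  Frobenius norm of \<open>M\<^sup>TM\<close> or equally of \<open>MM\<^sup>T\<close>, is at least the contribution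
  \<open>C(n, p) p (n - p) C(n - p - 1, q)\<^sup>2\<close> of the pairs of \<open>p\<close>-sets sharing \<open>p - 1\<close> points. Hence
  \<open>v/u \<le> (n - p) / (p (n - d)\<^sup>2) = O(1/m)\<close>.\<close>

section \<open>Linear algebra\<close>

lemma (in vector_space) upper_triangular_in_subspace:
  fixes N :: nat
  assumes W: "subspace W"
    and diag: "\<And>i. i \<le> N \<Longrightarrow> c i i \<noteq> 0"
    and upper: "\<And>i j. j < i \<Longrightarrow> c i j = 0"
    and rows: "\<And>i. i \<le> N \<Longrightarrow> (\<Sum>j\<le>N. scale (c i j) (x j)) \<in> W"
  shows "i \<le> N \<Longrightarrow> x i \<in> W"
proof (induction "N - i" arbitrary: i rule: less_induct)
  case less
  have split: "(\<Sum>j\<le>N. scale (c i j) (x j)) = scale (c i i) (x i) + (\<Sum>j\<in>{i<..N}. scale (c i j) (x j))"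
  proof -
    have "{..N} = {..<i} \<union> insert i {i<..N}"
      using less.prems by auto
    then have "(\<Sum>j\<le>N. scale (c i j) (x j)) =
        (\<Sum>j<i. scale (c i j) (x j)) + (\<Sum>j\<in>insert i {i<..N}. scale (c i j) (x j))"
      by (simp only:) (rule sum.union_disjoint; auto)
    then show ?thesis
      by (simp add: upper)
  qed
  have "(\<Sum>j\<in>{i<..N}. scale (c i j) (x j)) \<in> W"
    using less by (intro subspace_sum[OF W] subspace_scale[OF W] less.hyps) auto
  then have "scale (c i i) (x i) \<in> W"
    using rows[OF less.prems] subspace_diff[OF W] unfolding split by fastforce
  then show "x i \<in> W"
    using subspace_scale[OF W, of "scale (c i i) (x i)" "inverse (c i i)"] diag[OF less.prems] by simp
qed

lemma (in vector_space) card_le_dim_if_independent_family: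
  assumes "finite W" "finite A" "f ` A \<subseteq> span W"
    and indep: "\<And>w x. (\<Sum>y\<in>A. scale (w y) (f y)) = 0 \<Longrightarrow> x \<in> A \<Longrightarrow> w x = 0"
  shows "card A \<le> dim W"
proof -
  have inj: "inj_on f A"
  proof (rule inj_onI, rule ccontr)
    fix x y assume xy: "x \<in> A" "y \<in> A" "f x = f y" "x \<noteq> y"
    define w :: "_ \<Rightarrow> 'a" where "w z = (if z = x then 1 else if z = y then - 1 else 0)" for z
    have "(\<Sum>z\<in>A. scale (w z) (f z)) = (\<Sum>z\<in>{x, y}. scale (w z) (f z))"
      using xy \<open>finite A\<close> by (intro sum.mono_neutral_right) (auto simp: w_def)
    also have "\<dots> = f x - f y"
      using xy by (simp add: w_def scale_minus_left)
    finally show False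
      using indep[of w x] xy by (simp add: w_def)
  qed
  have "independent (f ` A)"
  proof (rule independent_if_scalars_zero)
    fix u v assume "(\<Sum>z\<in>f ` A. scale (u z) z) = 0" "v \<in> f ` A"
    then show "u v = 0"
      using indep[of "u \<circ> f"] by (auto simp: sum.reindex[OF inj])
  qed (use \<open>finite A\<close> in simp)
  obtain B where B: "B \<subseteq> span W" "independent B" "span W \<subseteq> span B" "card B = dim W"
    by (metis basis_exists dim_span)
  then have "finite B"
    using independent_span_bound[OF \<open>finite W\<close>] by blast
  moreover have "f ` A \<subseteq> span B"
    using assms(3) B(3) by blast
  ultimately have "card (f ` A) \<le> card B"
    using independent_span_bound \<open>independent (f ` A)\<close> by blast
  then show ?thesis
    using card_image[OF inj] B(4) by simp
qed

section \<open>Counting subsets\<close>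

lemma card_subsets_meeting:
  assumes "finite U" "T \<subseteq> U" "i \<le> q"
  shows "card {Y. Y \<subseteq> U \<and> card Y = q \<and> card (Y \<inter> T) = i}
       = (card T choose i) * (card (U - T) choose (q - i))"
proof -
  let ?A = "{A. A \<subseteq> T \<and> card A = i}" and ?B = "{B. B \<subseteq> U - T \<and> card B = q - i}"
  have fin: "finite T" "finite (U - T)"
    using assms finite_subset by auto
  have "{Y. Y \<subseteq> U \<and> card Y = q \<and> card (Y \<inter> T) = i} = (\<lambda>(A, B). A \<union> B) ` (?A \<times> ?B)"
  proof (intro set_eqI iffI)
    fix Y assume Y: "Y \<in> {Y. Y \<subseteq> U \<and> card Y = q \<and> card (Y \<inter> T) = i}"
    then have "card (Y - T) = q - i"
      using card_Int_Diff[of Y T] finite_subset[OF _ \<open>finite U\<close>] by auto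
    then have "(Y \<inter> T, Y - T) \<in> ?A \<times> ?B"
      using Y by auto
    then show "Y \<in> (\<lambda>(A, B). A \<union> B) ` (?A \<times> ?B)"
      by (intro image_eqI[of _ _ "(Y \<inter> T, Y - T)"]) auto
  next
    fix Y assume "Y \<in> (\<lambda>(A, B). A \<union> B) ` (?A \<times> ?B)"
    then obtain A B where AB: "A \<in> ?A" "B \<in> ?B" "Y = A \<union> B"
      by auto
    then have "card Y = q" "Y \<inter> T = A"
      using card_Un_disjoint[of A B] finite_subset fin assms(3) by auto
    then show "Y \<in> {Y. Y \<subseteq> U \<and> card Y = q \<and> card (Y \<inter> T) = i}"
      using AB assms(2) by auto
  qed
  moreover have "inj_on (\<lambda>(A, B). A \<union> B) (?A \<times> ?B)"
  proof (rule inj_onI, clarify)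
    fix A B A' B' assume "A \<subseteq> T" "B \<subseteq> U - T" "A' \<subseteq> T" "B' \<subseteq> U - T" "A \<union> B = A' \<union> B'"
    then show "A = A' \<and> B = B'"
      by blast
  qed
  ultimately show ?thesis
    using fin by (simp add: card_image card_cartesian_product n_subsets)
qed

lemma mem_subsets_of_size [simp]: "X \<in> subsets_of_size n s \<longleftrightarrow> X \<subseteq> {..<n} \<and> card X = s"
  by (simp add: subsets_of_size_def)

lemma finite_subsets_of_size [simp]: "finite (subsets_of_size n s)"
  unfolding subsets_of_size_def by (rule finite_subset[of _ "Pow {..<n}"]) auto

lemma card_subsets_of_size: "card (subsets_of_size n s) = n choose s"
  using n_subsets[of "{..<n}" s] by (simp add: subsets_of_size_def)

lemma finite_of_mem_subsets_of_size: "X \<in> subsets_of_size n s \<Longrightarrow> finite X"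
  using finite_subset by auto

lemma card_disjoint_meeting:
  assumes X: "X \<in> subsets_of_size n p" and T: "T \<in> subsets_of_size n p" and "i \<le> q"
  shows "card {Y \<in> subsets_of_size n q. Y \<inter> X = {} \<and> card (Y \<inter> T) = i}
       = (card (T - X) choose i) * ((n - p - card (T - X)) choose (q - i))"
proof -
  have "{Y \<in> subsets_of_size n q. Y \<inter> X = {} \<and> card (Y \<inter> T) = i}
      = {Y. Y \<subseteq> {..<n} - X \<and> card Y = q \<and> card (Y \<inter> (T - X)) = i}"
  proof -
    have "Y \<inter> (T - X) = Y \<inter> T" if "Y \<inter> X = {}" for Y
      using that by blast
    moreover have "Y \<inter> X = {}" if "Y \<subseteq> {..<n} - X" for Y
      using that by blast
    ultimately show ?thesis
      by auto
  qed
  moreover have "card ({..<n} - X - (T - X)) = n - p - card (T - X)"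
    using X T finite_of_mem_subsets_of_size[OF X] finite_of_mem_subsets_of_size[OF T]
    by (subst card_Diff_subset; auto simp: card_Diff_subset)
  ultimately show ?thesis
    using X T \<open>i \<le> q\<close> by (simp add: card_subsets_meeting Diff_mono)
qed

lemma Mdisj_commute: "Mdisj I J = Mdisj J I"
  by (simp add: Mdisj_def Int_commute)

lemma sum_Mdisj: "finite A \<Longrightarrow> (\<Sum>Y\<in>A. Mdisj X Y) = real (card {Y \<in> A. X \<inter> Y = {}})"
  by (simp add: Mdisj_def sum.If_cases Int_def)

lemma sum_Mdisj_Mdisj:
  assumes "X \<subseteq> {..<n}" "X' \<subseteq> {..<n}"
  shows "(\<Sum>Y\<in>subsets_of_size n q. Mdisj Y X * Mdisj Y X') = real ((n - card (X \<union> X')) choose q)"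
proof -
  have "(\<Sum>Y\<in>subsets_of_size n q. Mdisj Y X * Mdisj Y X') = (\<Sum>Y\<in>subsets_of_size n q. Mdisj (X \<union> X') Y)"
    by (intro sum.cong) (auto simp: Mdisj_def)
  also have "\<dots> = real (card {Y. Y \<subseteq> {..<n} - (X \<union> X') \<and> card Y = q})"
  proof -
    have "{Y \<in> subsets_of_size n q. (X \<union> X') \<inter> Y = {}} = {Y. Y \<subseteq> {..<n} - (X \<union> X') \<and> card Y = q}"
      by auto
    then show ?thesis
      by (simp add: sum_Mdisj)
  qed
  finally show ?thesis
    using assms finite_subset[of "X \<union> X'" "{..<n}"] by (simp add: n_subsets card_Diff_subset)
qed

section \<open>Squarefree monomials and elementary symmetric polynomials\<close>

lemma lookup_pscale [simp]: "Poly_Mapping.lookup (pscale c p) x = c * Poly_Mapping.lookup p x"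
  unfolding pscale_def by transfer (simp add: when_def)

interpretation pv: vector_space pscale
  by unfold_locales (auto intro!: poly_mapping_eqI simp: algebra_simps lookup_add)

definition sqfree_exp :: "nat set \<Rightarrow> (nat \<Rightarrow>\<^sub>0 nat)" where
  "sqfree_exp I = (\<Sum>i\<in>I. Poly_Mapping.single i 1)"

lemma lookup_sqfree_exp: "finite I \<Longrightarrow> Poly_Mapping.lookup (sqfree_exp I) j = (if j \<in> I then 1 else 0)"
  unfolding sqfree_exp_def by (simp add: lookup_sum lookup_single when_def)

lemma sqfree_exp_eq_iff:
  assumes "finite I" "finite J"
  shows "sqfree_exp I = sqfree_exp J \<longleftrightarrow> I = J"
proof
  assume "sqfree_exp I = sqfree_exp J"
  then have "(if j \<in> I then 1 else 0 :: nat) = (if j \<in> J then 1 else 0)" for j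
    by (metis assms lookup_sqfree_exp)
  then show "I = J"
    by (metis one_neq_zero subsetI subset_antisym)
qed simp

lemma add_single_eq_sqfree_exp:
  assumes "finite J"
  shows "e + Poly_Mapping.single i 1 = sqfree_exp J \<longleftrightarrow> i \<in> J \<and> e = sqfree_exp (J - {i})"
proof
  assume e: "e + Poly_Mapping.single i 1 = sqfree_exp J"
  have pointwise: "Poly_Mapping.lookup e j + (if j = i then 1 else 0) = (if j \<in> J then 1 else 0)" for j
    using arg_cong[OF e, of "\<lambda>m. Poly_Mapping.lookup m j"] assms
    by (auto simp: lookup_add lookup_single lookup_sqfree_exp when_def split: if_splits)
  then have "i \<in> J"
    using pointwise[of i] by (auto split: if_splits)
  moreover have "e = sqfree_exp (J - {i})"
  proof (rule poly_mapping_eqI)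
    fix j
    show "Poly_Mapping.lookup e j = Poly_Mapping.lookup (sqfree_exp (J - {i})) j"
      using pointwise[of j] assms by (auto simp: lookup_sqfree_exp split: if_splits)
  qed
  ultimately show "i \<in> J \<and> e = sqfree_exp (J - {i})" ..
next
  assume i: "i \<in> J \<and> e = sqfree_exp (J - {i})"
  have "sqfree_exp J = Poly_Mapping.single i 1 + sqfree_exp (J - {i})"
    unfolding sqfree_exp_def using assms i by (intro sum.remove) auto
  then show "e + Poly_Mapping.single i 1 = sqfree_exp J"
    using i by (simp add: add.commute)
qed

lemma lookup_mono_set: "Poly_Mapping.lookup (mono_set I) e = (if e = sqfree_exp I then 1 else 0)"
  unfolding mono_set_def sqfree_exp_def by (simp add: lookup_single when_def eq_commute)

lemma lookup_sum_scaled_mono_set: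
  assumes "J\<^sub>0 \<in> subsets_of_size n a"
  shows "Poly_Mapping.lookup (\<Sum>J\<in>subsets_of_size n a. pscale (c J) (mono_set J)) (sqfree_exp J\<^sub>0) = c J\<^sub>0"
proof -
  have "Poly_Mapping.lookup (\<Sum>J\<in>subsets_of_size n a. pscale (c J) (mono_set J)) (sqfree_exp J\<^sub>0)
      = (\<Sum>J\<in>subsets_of_size n a. if J = J\<^sub>0 then c J else 0)"
    unfolding lookup_sum lookup_pscale lookup_mono_set
  proof (intro sum.cong refl)
    fix J assume "J \<in> subsets_of_size n a"
    then have "sqfree_exp J\<^sub>0 = sqfree_exp J \<longleftrightarrow> J = J\<^sub>0"
      using assms finite_of_mem_subsets_of_size by (metis sqfree_exp_eq_iff)
    then show "c J * (if sqfree_exp J\<^sub>0 = sqfree_exp J then 1 else 0) = (if J = J\<^sub>0 then c J else 0)"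
      by simp
  qed
  then show ?thesis
    using assms by (simp add: sum.delta)
qed

definition elem_sym :: "nat set \<Rightarrow> nat \<Rightarrow> rpoly" where
  "elem_sym V d = (\<Sum>J\<in>{J. J \<subseteq> V \<and> card J = d}. mono_set J)"

lemma Sym_eq_elem_sym: "Sym d n = elem_sym {..<n} d"
  by (simp add: Sym_def elem_sym_def)

lemma lookup_elem_sym:
  assumes "finite V"
  shows "Poly_Mapping.lookup (elem_sym V d) e = (if \<exists>J\<subseteq>V. card J = d \<and> e = sqfree_exp J then 1 else 0)"
proof (cases "\<exists>J\<subseteq>V. card J = d \<and> e = sqfree_exp J")
  case True
  then obtain J\<^sub>0 where J\<^sub>0: "J\<^sub>0 \<subseteq> V" "card J\<^sub>0 = d" "e = sqfree_exp J\<^sub>0"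
    by blast
  have "Poly_Mapping.lookup (elem_sym V d) e = (\<Sum>J\<in>{J. J \<subseteq> V \<and> card J = d}. if J = J\<^sub>0 then 1 else 0)"
    unfolding elem_sym_def lookup_sum lookup_mono_set J\<^sub>0(3)
    using assms J\<^sub>0(1) by (intro sum.cong) (auto simp: sqfree_exp_eq_iff finite_subset)
  also have "\<dots> = 1"
    using assms J\<^sub>0 by (simp add: sum.delta)
  finally show ?thesis
    using True by simp
next
  case False
  then show ?thesis
    unfolding elem_sym_def lookup_sum lookup_mono_set by (intro trans[OF sum.neutral]) auto
qed

lemma lookup_pderiv_var:
  "Poly_Mapping.lookup (pderiv_var i p) a = of_nat (Poly_Mapping.lookup a i + 1) * Poly_Mapping.lookup p (a + Poly_Mapping.single i 1)"
proof -
  have "finite {a. a + Poly_Mapping.single i 1 \<in> Poly_Mapping.keys p}"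
    by (rule finite_vimageI[where h = "\<lambda>a. a + Poly_Mapping.single i 1", unfolded vimage_def])
       (auto simp: inj_on_def)
  then have "finite {a. of_nat (Poly_Mapping.lookup a i + 1) * Poly_Mapping.lookup p (a + Poly_Mapping.single i 1) \<noteq> (0::real)}"
    by (rule finite_subset[rotated]) (auto simp: in_keys_iff)
  then show ?thesis
    unfolding pderiv_var_def by simp
qed

lemma pderiv_var_elem_sym:
  assumes "finite V" "i \<in> V" "0 < d"
  shows "pderiv_var i (elem_sym V d) = elem_sym (V - {i}) (d - 1)"
proof (rule poly_mapping_eqI)
  fix e
  have "(\<exists>J\<subseteq>V. card J = d \<and> e + Poly_Mapping.single i 1 = sqfree_exp J)
      \<longleftrightarrow> (\<exists>J\<subseteq>V - {i}. card J = d - 1 \<and> e = sqfree_exp J)" (is "?L \<longleftrightarrow> ?R")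
  proof
    assume ?L
    then obtain J where J: "J \<subseteq> V" "card J = d" "e + Poly_Mapping.single i 1 = sqfree_exp J"
      by blast
    moreover have "finite J"
      using J(1) assms(1) finite_subset by blast
    ultimately have "i \<in> J" "e = sqfree_exp (J - {i})"
      using add_single_eq_sqfree_exp by blast+
    then show ?R
      using J
      by (intro exI[of _ "J - {i}"]) auto
  next
    assume ?R
    then obtain J where J: "J \<subseteq> V - {i}" "card J = d - 1" "e = sqfree_exp J"
      by blast
    moreover have "finite J" "i \<notin> J"
      using J assms(1) finite_subset by auto
    ultimately have "card (insert i J) = d" "e + Poly_Mapping.single i 1 = sqfree_exp (insert i J)"
      using assms(3) add_single_eq_sqfree_exp[of "insert i J" e i] by auto
    then show ?L
      using J assms(2) by (intro exI[of _ "insert i J"]) auto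
  qed
  moreover have "Poly_Mapping.lookup e i = 0" if ?R
    using that assms(1) by (auto simp: lookup_sqfree_exp finite_subset)
  ultimately show "Poly_Mapping.lookup (pderiv_var i (elem_sym V d)) e = Poly_Mapping.lookup (elem_sym (V - {i}) (d - 1)) e"
    using assms(1) by (simp add: lookup_pderiv_var lookup_elem_sym)
qed

lemma foldr_pderiv_var_elem_sym:
  assumes "finite V" "distinct is" "set is \<subseteq> V" "length is \<le> d"
  shows "foldr pderiv_var is (elem_sym V d) = elem_sym (V - set is) (d - length is)"
  using assms(2-4)
proof (induction "is")
  case (Cons i "is")
  then have "foldr pderiv_var (i # is) (elem_sym V d) = pderiv_var i (elem_sym (V - set is) (d - length is))"
    by simp
  also have "\<dots> = elem_sym (V - set is - {i}) (d - length is - 1)"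
    using Cons.prems assms(1) by (intro pderiv_var_elem_sym) auto
  also have "V - set is - {i} = V - set (i # is)"
    by auto
  finally show ?case
    by simp
qed simp

lemma foldr_pderiv_var_Sym:
  assumes "S \<subseteq> {..<n}" "card S \<le> d"
  shows "foldr pderiv_var (sorted_list_of_set S) (Sym d n) = elem_sym ({..<n} - S) (d - card S)"
  using assms finite_subset[OF assms(1)]
  by (simp add: Sym_eq_elem_sym foldr_pderiv_var_elem_sym)

lemma elem_sym_complement:
  assumes "S \<subseteq> {..<n}"
  shows "elem_sym ({..<n} - S) a = (\<Sum>J\<in>subsets_of_size n a. pscale (Mdisj S J) (mono_set J))"
proof -
  have "(\<Sum>J\<in>subsets_of_size n a. pscale (Mdisj S J) (mono_set J))
      = (\<Sum>J\<in>subsets_of_size n a. if S \<inter> J = {} then mono_set J else 0)"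
    by (intro sum.cong) (auto simp: Mdisj_def)
  also have "\<dots> = (\<Sum>J\<in>{J \<in> subsets_of_size n a. S \<inter> J = {}}. mono_set J)"
    by (rule sum.inter_filter[symmetric]) simp
  also have "{J \<in> subsets_of_size n a. S \<inter> J = {}} = {J. J \<subseteq> {..<n} - S \<and> card J = a}"
    by auto
  finally show ?thesis
    by (simp add: elem_sym_def)
qed

section \<open>The dimension of the space of partial derivatives\<close>

lemma disjointness_kernel_trivial:
  fixes w :: "nat set \<Rightarrow> real"
  assumes "p \<le> q" "p + q \<le> n"
    and kernel: "\<And>Y. Y \<in> subsets_of_size n q \<Longrightarrow> (\<Sum>X\<in>subsets_of_size n p. w X * Mdisj X Y) = 0"
    and T: "T \<in> subsets_of_size n p"
  shows "w T = 0"
proof -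
  define g where "g i j = real ((j choose i) * ((n - p - j) choose (q - i)))" for i j
  define Q where "Q j = (\<Sum>X\<in>{X \<in> subsets_of_size n p. card (T - X) = j}. w X)" for j
  \<comment> \<open>Summing the kernel equations over the \<open>q\<close>-sets meeting \<open>T\<close> in \<open>i\<close> points gives an upper
    triangular system for the weights \<open>Q\<close> of the layers around \<open>T\<close>.\<close>
  have "(\<Sum>j\<le>p. g i j * Q j) = 0" if "i \<le> p" for i
  proof -
    let ?Y = "{Y \<in> subsets_of_size n q. card (Y \<inter> T) = i}"
    have "0 = (\<Sum>Y\<in>?Y. \<Sum>X\<in>subsets_of_size n p. w X * Mdisj X Y)"
      using kernel by simp
    also have "\<dots> = (\<Sum>X\<in>subsets_of_size n p. w X * (\<Sum>Y\<in>?Y. Mdisj X Y))"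
      unfolding sum_distrib_left by (rule sum.swap)
    also have "\<dots> = (\<Sum>X\<in>subsets_of_size n p. w X * g i (card (T - X)))"
    proof (intro sum.cong refl arg_cong[where f = "\<lambda>x. w _ * x"])
      fix X assume X: "X \<in> subsets_of_size n p"
      have "{Y \<in> ?Y. X \<inter> Y = {}} = {Y \<in> subsets_of_size n q. Y \<inter> X = {} \<and> card (Y \<inter> T) = i}"
        by auto
      then show "(\<Sum>Y\<in>?Y. Mdisj X Y) = g i (card (T - X))"
        using card_disjoint_meeting[OF X T] that assms(1) by (simp add: sum_Mdisj g_def)
    qed
    also have "\<dots> = (\<Sum>j\<le>p. \<Sum>X\<in>{X \<in> subsets_of_size n p. card (T - X) = j}. w X * g i (card (T - X)))"
      using T finite_of_mem_subsets_of_size[OF T]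
      by (intro sum.group[symmetric]) (auto intro: order.trans[OF card_mono])
    also have "\<dots> = (\<Sum>j\<le>p. g i j * Q j)"
      by (simp add: Q_def sum_distrib_left mult.commute)
    finally show ?thesis
      by simp
  qed
  then have "Q 0 \<in> {0}"
    using assms(1,2)
    by (intro real_vector.upper_triangular_in_subspace[of "{0}" p g Q]) (auto simp: g_def)
  moreover have "{X \<in> subsets_of_size n p. card (T - X) = 0} = {T}"
  proof -
    have "X = T" if X: "X \<in> subsets_of_size n p" "card (T - X) = 0" for X
      using T X finite_of_mem_subsets_of_size[OF T] finite_of_mem_subsets_of_size[OF X(1)]
      by (intro card_subset_eq[symmetric]) auto
    then show ?thesis
      using T by auto
  qed
  ultimately show ?thesis
    by (simp add: Q_def)
qed

lemma sum_elem_sym_complement_meeting: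
  assumes B: "B \<in> subsets_of_size n a" and "i \<le> k"
  shows "(\<Sum>S\<in>{S \<in> subsets_of_size n k. card (S \<inter> B) = i}. elem_sym ({..<n} - S) a)
       = (\<Sum>j\<le>a. pscale (real ((j choose i) * ((n - a - j) choose (k - i))))
                    (\<Sum>J\<in>{J \<in> subsets_of_size n a. card (B - J) = j}. mono_set J))"
proof -
  define c where "c j = real ((j choose i) * ((n - a - j) choose (k - i)))" for j
  let ?S = "{S \<in> subsets_of_size n k. card (S \<inter> B) = i}"
  have "(\<Sum>S\<in>?S. elem_sym ({..<n} - S) a)
      = (\<Sum>S\<in>?S. \<Sum>J\<in>subsets_of_size n a. pscale (Mdisj S J) (mono_set J))"
    by (intro sum.cong refl elem_sym_complement) auto
  also have "\<dots> = (\<Sum>J\<in>subsets_of_size n a. pscale (\<Sum>S\<in>?S. Mdisj S J) (mono_set J))"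
    unfolding pv.scale_sum_left by (rule sum.swap)
  also have "\<dots> = (\<Sum>J\<in>subsets_of_size n a. pscale (c (card (B - J))) (mono_set J))"
  proof (intro sum.cong refl arg_cong[where f = "\<lambda>x. pscale x _"])
    fix J assume J: "J \<in> subsets_of_size n a"
    have "{S \<in> ?S. J \<inter> S = {}} = {S \<in> subsets_of_size n k. S \<inter> J = {} \<and> card (S \<inter> B) = i}"
      by auto
    then have "(\<Sum>S\<in>?S. Mdisj J S) = c (card (B - J))"
      using card_disjoint_meeting[OF J B \<open>i \<le> k\<close>] by (simp add: sum_Mdisj c_def)
    then show "(\<Sum>S\<in>?S. Mdisj S J) = c (card (B - J))"
      by (simp add: Mdisj_commute)
  qed
  also have "\<dots> = (\<Sum>j\<le>a. \<Sum>J\<in>{J \<in> subsets_of_size n a. card (B - J) = j}. pscale (c (card (B - J))) (mono_set J))"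
    using B finite_of_mem_subsets_of_size[OF B]
    by (intro sum.group[symmetric]) (auto intro: order.trans[OF card_mono])
  also have "\<dots> = (\<Sum>j\<le>a. pscale (c j) (\<Sum>J\<in>{J \<in> subsets_of_size n a. card (B - J) = j}. mono_set J))"
    by (simp add: pv.scale_sum_right)
  finally show ?thesis
    by (simp add: c_def)
qed

lemma mono_set_in_span_elem_sym_complements:
  assumes "a \<le> k" "a + k \<le> n" and B: "B \<in> subsets_of_size n a"
  shows "mono_set B \<in> pv.span ((\<lambda>S. elem_sym ({..<n} - S) a) ` subsets_of_size n k)"
proof -
  define c where "c i j = real ((j choose i) * ((n - a - j) choose (k - i)))" for i j
  define R where "R j = (\<Sum>J\<in>{J \<in> subsets_of_size n a. card (B - J) = j}. mono_set J)" for j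
  have rows: "(\<Sum>j\<le>a. pscale (c i j) (R j)) \<in> pv.span ((\<lambda>S. elem_sym ({..<n} - S) a) ` subsets_of_size n k)"
    if "i \<le> a" for i
  proof -
    have "(\<Sum>j\<le>a. pscale (c i j) (R j))
        = (\<Sum>S\<in>{S \<in> subsets_of_size n k. card (S \<inter> B) = i}. elem_sym ({..<n} - S) a)"
      unfolding c_def R_def
      by (rule sum_elem_sym_complement_meeting[OF B, symmetric]) (use that assms(1) in simp)
    also have "\<dots> \<in> pv.span ((\<lambda>S. elem_sym ({..<n} - S) a) ` subsets_of_size n k)"
      by (intro pv.span_sum pv.span_base) auto
    finally show ?thesis .
  qed
  have "R 0 \<in> pv.span ((\<lambda>S. elem_sym ({..<n} - S) a) ` subsets_of_size n k)"
  proof (rule pv.upper_triangular_in_subspace[where c = c and N = a])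
    show "c i i \<noteq> 0" if "i \<le> a" for i
      using that assms(1,2) by (simp add: c_def)
    show "c i j = 0" if "j < i" for i j
      using that by (simp add: c_def)
  qed (use rows in auto)
  moreover have "{J \<in> subsets_of_size n a. card (B - J) = 0} = {B}"
  proof -
    have "J = B" if J: "J \<in> subsets_of_size n a" "card (B - J) = 0" for J
      using B J finite_of_mem_subsets_of_size[OF B] finite_of_mem_subsets_of_size[OF J(1)]
      by (intro card_subset_eq[symmetric]) auto
    then show ?thesis
      using B by auto
  qed
  ultimately show ?thesis
    by (simp add: R_def)
qed

lemma elem_sym_complements_independent:
  assumes "k \<le> a" "k + a \<le> n"
    and zero: "(\<Sum>S\<in>subsets_of_size n k. pscale (w S) (elem_sym ({..<n} - S) a)) = 0"
    and T: "T \<in> subsets_of_size n k"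
  shows "w T = 0"
proof (rule disjointness_kernel_trivial[OF assms(1,2) _ T])
  fix J assume J: "J \<in> subsets_of_size n a"
  have "0 = Poly_Mapping.lookup (\<Sum>S\<in>subsets_of_size n k. pscale (w S) (elem_sym ({..<n} - S) a)) (sqfree_exp J)"
    using zero by simp
  also have "\<dots> = (\<Sum>S\<in>subsets_of_size n k. w S * Mdisj S J)"
    unfolding lookup_sum lookup_pscale
  proof (intro sum.cong refl arg_cong[where f = "\<lambda>x. w _ * x"])
    fix S assume "S \<in> subsets_of_size n k"
    then have "elem_sym ({..<n} - S) a = (\<Sum>J\<in>subsets_of_size n a. pscale (Mdisj S J) (mono_set J))"
      by (intro elem_sym_complement) simp
    then show "Poly_Mapping.lookup (elem_sym ({..<n} - S) a) (sqfree_exp J) = Mdisj S J"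
      using lookup_sum_scaled_mono_set[OF J] by simp
  qed
  finally show "(\<Sum>S\<in>subsets_of_size n k. w S * Mdisj S J) = 0"
    by simp
qed

lemma finite_partials: "finite {foldr pderiv_var is f | is. length is = k \<and> set is \<subseteq> {..<n}}"
proof -
  have "{foldr pderiv_var is f | is. length is = k \<and> set is \<subseteq> {..<n}}
      = (\<lambda>is. foldr pderiv_var is f) ` {is. set is \<subseteq> {..<n} \<and> length is = k}"
    by auto
  then show ?thesis
    using finite_lists_length_eq[of "{..<n}" k] by simp
qed

lemma dim_partials_Sym_ge:
  assumes "k \<le> d" "d \<le> n"
  shows "n choose min k (d - k) \<le> dim_partials n k (Sym d n)"
proof -
  let ?P = "{foldr pderiv_var is (Sym d n) | is. length is = k \<and> set is \<subseteq> {..<n}}"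
  let ?D = "\<lambda>S. elem_sym ({..<n} - S) (d - k)"
  have D_in_P: "?D ` subsets_of_size n k \<subseteq> ?P"
  proof
    fix p assume "p \<in> ?D ` subsets_of_size n k"
    then obtain S where S: "S \<subseteq> {..<n}" "card S = k" "p = ?D S"
      by auto
    then have "p = foldr pderiv_var (sorted_list_of_set S) (Sym d n)"
      using assms(1) by (simp add: foldr_pderiv_var_Sym)
    then show "p \<in> ?P"
      using S finite_subset[OF S(1)] by (auto intro!: exI[of _ "sorted_list_of_set S"])
  qed
  show ?thesis
  proof (cases "k \<le> d - k")
    case True
    have "card (subsets_of_size n k) \<le> pv.dim ?P"
    proof (rule pv.card_le_dim_if_independent_family[OF finite_partials])
      show "?D ` subsets_of_size n k \<subseteq> pv.span ?P"
        using D_in_P pv.span_superset by blast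
      show "w T = 0" if "(\<Sum>S\<in>subsets_of_size n k. pscale (w S) (?D S)) = 0" "T \<in> subsets_of_size n k" for w T
        using assms by (intro elem_sym_complements_independent[OF True _ that]) simp
    qed simp
    then show ?thesis
      using True by (simp add: dim_partials_def pdim_span_def card_subsets_of_size)
  next
    case False
    have "card (subsets_of_size n (d - k)) \<le> pv.dim ?P"
    proof (rule pv.card_le_dim_if_independent_family[OF finite_partials])
      have "mono_set ` subsets_of_size n (d - k) \<subseteq> pv.span (?D ` subsets_of_size n k)"
        using False assms mono_set_in_span_elem_sym_complements[of "d - k" k n] by (simp add: image_subset_iff)
      then show "mono_set ` subsets_of_size n (d - k) \<subseteq> pv.span ?P"
        using pv.span_mono[OF D_in_P] by blast
      show "w J = 0" if "(\<Sum>B\<in>subsets_of_size n (d - k). pscale (w B) (mono_set B)) = 0"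
        "J \<in> subsets_of_size n (d - k)" for w J
        using lookup_sum_scaled_mono_set[OF that(2), of w] that(1) by simp
    qed simp
    then show ?thesis
      using False by (simp add: dim_partials_def pdim_span_def card_subsets_of_size)
  qed
qed

section \<open>The traces of \<open>B\<close> and \<open>B\<^sup>2\<close>\<close>

lemma sum_gram_square_transpose:
  fixes M :: "'b \<Rightarrow> 'a \<Rightarrow> 'c::comm_semiring_1"
  shows "(\<Sum>J\<in>A. \<Sum>J'\<in>A. (\<Sum>I\<in>B. M I J * M I J') ^ 2)
       = (\<Sum>I\<in>B. \<Sum>I'\<in>B. (\<Sum>J\<in>A. M I J * M I' J) ^ 2)"
proof -
  have "(\<Sum>J\<in>A. \<Sum>J'\<in>A. (\<Sum>I\<in>B. M I J * M I J') ^ 2)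
      = (\<Sum>J\<in>A. \<Sum>J'\<in>A. \<Sum>I\<in>B. \<Sum>I'\<in>B. M I J * M I' J * (M I J' * M I' J'))"
    by (simp add: power2_eq_square sum_product mult_ac)
  also have "\<dots> = (\<Sum>I\<in>B. \<Sum>I'\<in>B. \<Sum>J\<in>A. \<Sum>J'\<in>A. M I J * M I' J * (M I J' * M I' J'))"
    by (subst sum.swap, subst (2) sum.swap, subst (3) sum.swap) (rule sum.swap)
  also have "\<dots> = (\<Sum>I\<in>B. \<Sum>I'\<in>B. (\<Sum>J\<in>A. M I J * M I' J) ^ 2)"
    by (simp add: power2_eq_square sum_product)
  finally show ?thesis .
qed

definition disj_energy :: "nat \<Rightarrow> nat \<Rightarrow> nat \<Rightarrow> real" where
  "disj_energy n p q = (\<Sum>X\<in>subsets_of_size n p. \<Sum>X'\<in>subsets_of_size n p.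
      (\<Sum>Y\<in>subsets_of_size n q. Mdisj Y X * Mdisj Y X') ^ 2)"

lemma disj_energy_commute: "disj_energy n p q = disj_energy n q p"
  unfolding disj_energy_def sum_gram_square_transpose[of _ "subsets_of_size n p"]
  by (simp add: Mdisj_commute)

lemma trB2_eq_disj_energy: "trB2 n k d = disj_energy n (d - k) k"
  unfolding trB2_def disj_energy_def Bmat_def
  by (intro sum.cong refl) (simp add: power2_eq_square mult.commute)

lemma trB_eq: "trB n k d = real (n choose (d - k)) * real ((n - (d - k)) choose k)"
proof -
  have "trB n k d = (\<Sum>J\<in>subsets_of_size n (d - k). real ((n - (d - k)) choose k))"
    unfolding trB_def Bmat_def by (intro sum.cong refl) (simp add: sum_Mdisj_Mdisj)
  then show ?thesis
    by (simp add: card_subsets_of_size)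
qed

lemma choose_mult_commute: "p + q \<le> n \<Longrightarrow> (n choose p) * ((n - p) choose q) = (n choose q) * ((n - q) choose p)"
  using choose_mult[of p "p + q" n] choose_mult[of q "p + q" n] binomial_symmetric[of p "p + q"]
  by (simp add: add.commute)

lemma disj_energy_ge:
  assumes "1 \<le> p"
  shows "real (n choose p) * real (p * (n - p)) * real ((n - p - 1) choose q) ^ 2 \<le> disj_energy n p q"
proof -
  let ?f = "\<lambda>X X'. (\<Sum>Y\<in>subsets_of_size n q. Mdisj Y X * Mdisj Y X') ^ 2"
  have "real (p * (n - p)) * real ((n - p - 1) choose q) ^ 2 \<le> (\<Sum>X'\<in>subsets_of_size n p. ?f X X')"
    if X: "X \<in> subsets_of_size n p" for X
  proof -
    let ?N = "{X' \<in> subsets_of_size n p. card (X' \<inter> X) = p - 1}"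
    have fin: "finite X"
      using finite_of_mem_subsets_of_size[OF X] .
    have "card ?N = p * (n - p)"
    proof -
      have "?N = {X'. X' \<subseteq> {..<n} \<and> card X' = p \<and> card (X' \<inter> X) = p - 1}"
        by auto
      moreover have "card ({..<n} - X) = n - p" "p choose (p - 1) = p" "p - (p - 1) = 1"
        using X fin assms binomial_symmetric[of "p - 1" p] by (auto simp: card_Diff_subset)
      ultimately show ?thesis
        using card_subsets_meeting[of "{..<n}" X "p - 1" p] X by simp
    qed
    moreover have "?f X X' = real ((n - p - 1) choose q) ^ 2" if X': "X' \<in> ?N" for X'
    proof -
      have fin': "finite X'"
        using X' finite_of_mem_subsets_of_size by blast
      have "card X' = card (X' \<inter> X) + card (X' - X)"
        using card_Int_Diff[OF fin'] .
      then have "card (X' - X) = 1"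
        using X' assms by auto
      moreover have "card (X \<union> X') = card X + card (X' - X)"
        using card_Un_disjoint[of X "X' - X"] fin fin' by (simp add: Un_Diff_cancel)
      ultimately have "card (X \<union> X') = p + 1"
        using X by simp
      then show ?thesis
        using sum_Mdisj_Mdisj[of X n X' q] X X' by simp
    qed
    ultimately have "(\<Sum>X'\<in>?N. ?f X X') = real (p * (n - p)) * real ((n - p - 1) choose q) ^ 2"
      by simp
    moreover have "(\<Sum>X'\<in>?N. ?f X X') \<le> (\<Sum>X'\<in>subsets_of_size n p. ?f X X')"
      by (intro sum_mono2) auto
    ultimately show ?thesis
      by simp
  qed
  then have "(\<Sum>X\<in>subsets_of_size n p. real (p * (n - p)) * real ((n - p - 1) choose q) ^ 2) \<le> disj_energy n p q"
    unfolding disj_energy_def by (rule sum_mono)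
  then show ?thesis
    by (simp add: card_subsets_of_size mult.assoc)
qed

lemma trace_ratio_le:
  fixes T T2 u :: real
  assumes "0 < p" "p + q < n"
    and T: "T = real (n choose p) * real ((n - p) choose q)"
    and T2: "real (n choose p) * real (p * (n - p)) * real ((n - p - 1) choose q) ^ 2 \<le> T2"
    and u: "real (n choose p) \<le> u"
  shows "\<bar>T ^ 2 / T2 / u\<bar> \<le> real (n - p) / (real p * real (n - (p + q)) ^ 2)"
proof -
  define c c\<^sub>0 c\<^sub>1 N D where "c = real (n choose p)" and "c\<^sub>0 = real ((n - p) choose q)"
    and "c\<^sub>1 = real ((n - p - 1) choose q)" and "N = real (n - p)" and "D = real (n - (p + q))"
  have pos: "0 < c" "0 < c\<^sub>0" "0 < c\<^sub>1" "0 < N" "0 < D"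
    using assms(2) by (simp_all add: c_def c\<^sub>0_def c\<^sub>1_def N_def D_def)
  have absorb: "N * c\<^sub>1 = D * c\<^sub>0"
    using binomial_absorb_comp[of "n - p" q] unfolding N_def D_def c\<^sub>0_def c\<^sub>1_def
    by (metis diff_diff_left of_nat_mult)
  have T2_pos: "0 < c * real p * N * c\<^sub>1 ^ 2"
    using pos assms(1) by simp
  have "T ^ 2 / T2 / u \<le> (c * c\<^sub>0) ^ 2 / (c * real p * N * c\<^sub>1 ^ 2) / c"
    using T T2 u pos T2_pos unfolding c_def c\<^sub>0_def c\<^sub>1_def N_def
    by (intro divide_mono divide_left_mono) (auto simp: mult.assoc)
  also have "\<dots> = N * (D * c\<^sub>0) ^ 2 / (real p * D ^ 2 * (N * c\<^sub>1) ^ 2)"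
    using pos by (simp add: field_simps power2_eq_square)
  also have "\<dots> = N / (real p * D ^ 2)"
    using pos assms(1) by (simp add: absorb field_simps power2_eq_square)
  finally have "T ^ 2 / T2 / u \<le> N / (real p * D ^ 2)" .
  moreover have "0 \<le> T ^ 2 / T2 / u"
    using T2 T2_pos u pos unfolding c_def c\<^sub>1_def N_def by auto
  ultimately show ?thesis
    by (simp add: N_def D_def)
qed

lemma partials_trace_ratio_le:
  assumes "0 < k" "k < d" "d < n"
  shows "\<bar>trB n k d ^ 2 / trB2 n k d / real (dim_partials n k (Sym d n))\<bar>
       \<le> real n / (real (min k (d - k)) * real (n - d) ^ 2)"
proof -
  obtain p q where pq: "p = min k (d - k)" "p + q = d"
    and T: "trB n k d = real (n choose p) * real ((n - p) choose q)"
    and T2: "trB2 n k d = disj_energy n p q"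
  proof (cases "k \<le> d - k")
    case True
    have "(n choose (d - k)) * ((n - (d - k)) choose k) = (n choose k) * ((n - k) choose (d - k))"
      using choose_mult_commute[of "d - k" k n] assms by simp
    then have "trB n k d = real (n choose k) * real ((n - k) choose (d - k))"
      unfolding trB_eq by (metis of_nat_mult)
    then show ?thesis
      using that[of k "d - k"] True assms by (simp add: trB2_eq_disj_energy disj_energy_commute[of n "d - k"])
  next
    case False
    then show ?thesis
      using that[of "d - k" k] assms by (simp add: trB_eq trB2_eq_disj_energy)
  qed
  have "\<bar>trB n k d ^ 2 / trB2 n k d / real (dim_partials n k (Sym d n))\<bar>
      \<le> real (n - p) / (real p * real (n - (p + q)) ^ 2)"
  proof (rule trace_ratio_le[OF _ _ T])
    show "0 < p" "p + q < n"
      using pq assms by auto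
    show "real (n choose p) * real (p * (n - p)) * real ((n - p - 1) choose q) ^ 2 \<le> trB2 n k d"
      unfolding T2 using \<open>0 < p\<close> by (intro disj_energy_ge) simp
    show "real (n choose p) \<le> real (dim_partials n k (Sym d n))"
      using dim_partials_Sym_ge[of k d n] assms pq by simp
  qed
  also have "\<dots> \<le> real n / (real p * real (n - d) ^ 2)"
    unfolding pq(2) by (intro divide_right_mono) auto
  finally show ?thesis
    using pq by simp
qed

theorem proposition2:
  fixes k' d' n' :: nat
  assumes "0 < k'" "k' < d'" "2 * d' < n'"
  shows "(\<lambda>m. (trB (n' * m) (k' * m) (d' * m) ^ 2 / trB2 (n' * m) (k' * m) (d' * m))
              / real (dim_partials (n' * m) (k' * m) (Sym (d' * m) (n' * m))))
         \<longlonglongrightarrow> 0"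
proof (rule Lim_null_comparison[OF eventually_sequentiallyI lim_const_over_n])
  fix m :: nat assume m: "1 \<le> m"
  have "m \<le> min (k' * m) (d' * m - k' * m)" "m \<le> n' * m - d' * m"
    using assms by (auto simp flip: diff_mult_distrib)
  then have min_ge: "real m \<le> real (min (k' * m) (d' * m - k' * m))"
    and gap: "real m \<le> real (n' * m - d' * m)"
    by (simp_all only: of_nat_le_iff)
  have "norm (trB (n' * m) (k' * m) (d' * m) ^ 2 / trB2 (n' * m) (k' * m) (d' * m)
        / real (dim_partials (n' * m) (k' * m) (Sym (d' * m) (n' * m))))
      \<le> real (n' * m) / (real (min (k' * m) (d' * m - k' * m)) * real (n' * m - d' * m) ^ 2)"
    unfolding real_norm_def using m assms by (intro partials_trace_ratio_le) auto
  also have "\<dots> \<le> real (n' * m) / (real m * real m ^ 2)"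
  proof (rule divide_left_mono)
    show "real m * real m ^ 2 \<le> real (min (k' * m) (d' * m - k' * m)) * real (n' * m - d' * m) ^ 2"
      using min_ge gap by (intro mult_mono power_mono) auto
    show "0 < real (min (k' * m) (d' * m - k' * m)) * real (n' * m - d' * m) ^ 2 * (real m * real m ^ 2)"
      using m min_ge gap by (intro mult_pos_pos zero_less_power) linarith+
  qed simp
  also have "\<dots> \<le> real n' / real m"
    using m by (simp add: field_simps power2_eq_square mult_le_cancel_right1)
  finally show "norm (trB (n' * m) (k' * m) (d' * m) ^ 2 / trB2 (n' * m) (k' * m) (d' * m)
        / real (dim_partials (n' * m) (k' * m) (Sym (d' * m) (n' * m)))) \<le> real n' / real m" .
qed

end
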